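(* Let $n>1$ be square-free, let $r,t'\in\mathbb{Z}$ with $\gcd(r,n)=1$, and let $t=\gcd(t',n)$. Then \[\mathsf{c}(\mathrm{D}_{2n}\setminus\{1\},a_{n,r,t'})=\mathsf{c}(U_n,a_{n,r,0})+\mathsf{c}(V_n,a_{n,r,t}),\] where $\mathsf{c}(U_n,a_{n,r,0})=\sum_{d>1,\ d\mid n}\phi(d)/|r|_d$ and \[\mathsf{c}(V_n,a_{n,r,t})=\sum_{(d,\ell)}\frac{d}{\kappa(n,r,t)}\,\phi\!\left(\frac{|r|_n}{\ell\,\gcd\left(\kappa(d,r,t),|r|_n\right)}\right),\] the sum running over pairs of positive integers $(d,\ell)$ with $d\mid n$, $\ell\mid \frac{|r|_n}{\gcd(\kappa(d,r,t),|r|_n)}$ and $\gcd(r^{\ell\kappa(d,r,t)}-1,n)=d$.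
   Context: $\mathrm{D}_{2n}=\langle u_n,v_n\mid u_n^n=1=v_n^2,\ v_nu_nv_n=u_n^{-1}\rangle$. For integers $r,t$ with $\gcd(r,n)=1$, $a_{n,r,t}$ is the automorphism with $u_n^i\mapsto u_n^{ri}$, $u_n^jv_n\mapsto u_n^{rj+t}v_n$. $U_n:=\langle u_n\rangle\setminus\{1\}$, $V_n:=\{u_n^iv_n:0\le i\le n-1\}$. For a set $\Omega$ invariant under an automorphism $a$, $\mathsf{c}(\Omega,a)$ is the number of cycles (including fixed points) of the permutation induced by $a$ on $\Omega$. $|r|_m$ is the multiplicative order of $r$ mod $m$ (with $|r|_1=1$); $S_k(x):=1+x+\cdots+x^{k-1}$, $S_0=0$; $\kappa(m,r,t):=\dfrac{m|r|_m}{\gcd(m,tS_{|r|_m}(r))}$; $\phi$ is Euler's function. *)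

theory Defs
  imports "HOL-Computational_Algebra.Computational_Algebra" "HOL-Number_Theory.Number_Theory"
begin

text \<open>Concrete model of the dihedral group D_{2n}: the pair (i, False) stands for u_n^i
  and (i, True) for u_n^i v_n, with 0 \<le> i < n.\<close>

definition dihedral :: "nat \<Rightarrow> (int \<times> bool) set" where
  "dihedral n = {(i, b). 0 \<le> i \<and> i < int n}"

definition dih_one :: "int \<times> bool" where
  "dih_one = (0, False)"

definition U_set :: "nat \<Rightarrow> (int \<times> bool) set" where
  "U_set n = {(i, False) | i. 1 \<le> i \<and> i < int n}"

definition V_set :: "nat \<Rightarrow> (int \<times> bool) set" where
  "V_set n = {(i, True) | i. 0 \<le> i \<and> i < int n}"

definition aut :: "nat \<Rightarrow> int \<Rightarrow> int \<Rightarrow> int \<times> bool \<Rightarrow> int \<times> bool" where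
  "aut n r t x = (if snd x then ((r * fst x + t) mod int n, True)
                  else ((r * fst x) mod int n, False))"

definition ncycles :: "'a set \<Rightarrow> ('a \<Rightarrow> 'a) \<Rightarrow> nat" where
  "ncycles \<Omega> f = card ((\<lambda>x. {(f ^^ k) x | k. True}) ` \<Omega>)"

text \<open>Multiplicative order of r modulo m (equals 1 for m = 1).\<close>

definition mord :: "nat \<Rightarrow> int \<Rightarrow> nat" where
  "mord m r = (LEAST k::nat. 0 < k \<and> [r ^ k = 1] (mod int m))"

definition Ssum :: "nat \<Rightarrow> int \<Rightarrow> int" where
  "Ssum k x = (\<Sum>i<k. x ^ i)"

definition kappa :: "nat \<Rightarrow> int \<Rightarrow> int \<Rightarrow> nat" where
  "kappa m r t = nat ((int m * int (mord m r)) div gcd (int m) (t * Ssum (mord m r) r))"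

end

theory Submission
  imports Defs
begin

(* The rotations U_n and the reflections V_n are both invariant, and on U_n the
   automorphism a_{n,r,t'} acts as a_{n,r,0}; this gives the splitting.
   On U_n, u^i has period |r|_q with q = n / gcd(i,n), and exactly phi(q) of the i
   share a given q; summing the reciprocal periods gives c(U_n).
   On V_n the automorphism is the affine map j -> r j + t of Z/n, whose iterates are
   j -> r^k j + t S_k(r) and whose period is kappa(n,r,t). By Burnside's lemma for the
   cyclic group it generates, kappa(n,r,t) c(V_n) is the total number of fixed points
   of its powers, and the k-th power has gcd(r^k - 1, n) =: d fixed points when
   kappa(d,r,t) divides k and none otherwise. For squarefree n such a d makes n/d
   coprime to r - 1, so kappa(n,r,t) = lcm(kappa(d,r,t), |r|_n). Writing
   k = kappa(d,r,t) m, whether gcd(r^k - 1, n) = d depends only on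
   l = gcd(m, |r|_n / gcd(kappa(d,r,t), |r|_n)), and counting the m with a given l
   produces the totient factor. Finally kappa(d,r,t') = kappa(d,r,gcd(t',n)) for d | n,
   which lets t' be replaced by t. *)

section \<open>Orbits of a periodic map\<close>

definition iter_orbit :: "('a \<Rightarrow> 'a) \<Rightarrow> 'a \<Rightarrow> 'a set" where
  "iter_orbit f x = range (\<lambda>k. (f ^^ k) x)"

definition period :: "('a \<Rightarrow> 'a) \<Rightarrow> 'a \<Rightarrow> nat" where
  "period f x = (LEAST k. 0 < k \<and> (f ^^ k) x = x)"

lemma ncycles_iter_orbit: "ncycles S f = card (iter_orbit f ` S)"
  unfolding ncycles_def iter_orbit_def by (simp add: full_SetCompr_eq)

lemma self_in_iter_orbit: "x \<in> iter_orbit f x"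
  unfolding iter_orbit_def by (metis funpow_0 rangeI)

lemma funpow_mult_fixed: "(f ^^ N) x = x \<Longrightarrow> (f ^^ (N * q)) x = x"
  by (induction q) (auto simp: funpow_add)

lemma ncycles_cong:
  assumes "\<And>x. x \<in> S \<Longrightarrow> iter_orbit f x = iter_orbit g x"
  shows "ncycles S f = ncycles S g"
  using assms by (simp add: ncycles_iter_orbit cong: image_cong)

lemma ncycles_Un:
  assumes "A \<inter> B = {}" "finite A" "finite B"
    and "\<And>x. x \<in> A \<Longrightarrow> iter_orbit f x \<subseteq> A" "\<And>x. x \<in> B \<Longrightarrow> iter_orbit f x \<subseteq> B"
  shows "ncycles (A \<union> B) f = ncycles A f + ncycles B f"
proof -
  have "iter_orbit f ` A \<inter> iter_orbit f ` B = {}"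
  proof (rule ccontr)
    assume "iter_orbit f ` A \<inter> iter_orbit f ` B \<noteq> {}"
    then obtain a b where "a \<in> A" "b \<in> B" "iter_orbit f a = iter_orbit f b" by auto
    then show False using assms(1,5) self_in_iter_orbit[of a f] by blast
  qed
  then show ?thesis using assms(2,3) by (simp add: ncycles_iter_orbit image_Un card_Un_disjoint)
qed

lemma card_multiples_lessThan:
  assumes "0 < p" "p dvd (M::nat)" shows "card {k\<in>{..<M}. p dvd k} = M div p"
proof -
  have "{k\<in>{..<M}. p dvd k} = (\<lambda>i. p * i) ` {..<M div p}"
    using assms by (auto simp: dvd_def)
  moreover have "inj_on (\<lambda>i. p * i) {..<M div p}" using assms by (auto simp: inj_on_def)
  ultimately show ?thesis by (simp add: card_image)
qed

locale periodic_map =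
  fixes S :: "'a set" and f :: "'a \<Rightarrow> 'a" and N :: nat
  assumes finite_S: "finite S" and f_in_S: "\<And>x. x \<in> S \<Longrightarrow> f x \<in> S"
    and N_pos: "0 < N" and funpow_N: "\<And>x. x \<in> S \<Longrightarrow> (f ^^ N) x = x"
begin

lemma funpow_in_S: "x \<in> S \<Longrightarrow> (f ^^ k) x \<in> S"
  by (induction k) (auto intro: f_in_S)

lemma iter_orbit_subset: "x \<in> S \<Longrightarrow> iter_orbit f x \<subseteq> S"
  unfolding iter_orbit_def using funpow_in_S by auto

lemma
  assumes "x \<in> S"
  shows period_pos: "0 < period f x" and funpow_period: "(f ^^ period f x) x = x"
proof -
  have N_witness: "0 < N \<and> (f ^^ N) x = x" using N_pos funpow_N assms by simp
  show "0 < period f x" "(f ^^ period f x) x = x"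
    using LeastI[of "\<lambda>k. 0 < k \<and> (f ^^ k) x = x", OF N_witness] unfolding period_def by auto
qed

lemma funpow_mod_period:
  assumes "x \<in> S" shows "(f ^^ k) x = (f ^^ (k mod period f x)) x"
proof -
  have "(f ^^ k) x = (f ^^ (k mod period f x)) ((f ^^ (period f x * (k div period f x))) x)"
    by (metis funpow_add o_apply div_mult_mod_eq mult.commute add.commute)
  then show ?thesis using funpow_mult_fixed funpow_period[OF assms] by metis
qed

lemma funpow_eq_self_iff:
  assumes "x \<in> S" shows "(f ^^ k) x = x \<longleftrightarrow> period f x dvd k"
proof
  assume fixed: "(f ^^ k) x = x"
  show "period f x dvd k"
  proof (rule ccontr)
    assume "\<not> period f x dvd k"
    then have "0 < k mod period f x" by (simp add: mod_greater_zero_iff_not_dvd)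
    moreover have "(f ^^ (k mod period f x)) x = x"
      using fixed funpow_mod_period[OF assms, of k] by simp
    ultimately have "period f x \<le> k mod period f x"
      unfolding period_def by (simp add: Least_le)
    with period_pos[OF assms] show False by (meson mod_less_divisor not_le)
  qed
qed (use funpow_mod_period[OF assms, of k] in simp)

lemma period_dvd_N: "x \<in> S \<Longrightarrow> period f x dvd N"
  using funpow_N funpow_eq_self_iff by blast

lemma iter_orbit_eq_image:
  assumes "x \<in> S" shows "iter_orbit f x = (\<lambda>k. (f ^^ k) x) ` {..<period f x}"
proof
  show "iter_orbit f x \<subseteq> (\<lambda>k. (f ^^ k) x) ` {..<period f x}"
  proof
    fix y assume "y \<in> iter_orbit f x"
    then obtain k where "y = (f ^^ (k mod period f x)) x"
      unfolding iter_orbit_def using funpow_mod_period[OF assms] by auto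
    moreover have "k mod period f x \<in> {..<period f x}" using period_pos[OF assms] by simp
    ultimately show "y \<in> (\<lambda>k. (f ^^ k) x) ` {..<period f x}" by blast
  qed
qed (auto simp: iter_orbit_def)

lemma inj_on_funpow_period:
  assumes "x \<in> S" shows "inj_on (\<lambda>k. (f ^^ k) x) {..<period f x}"
proof -
  have "a = b" if "a \<le> b" "b < period f x" "(f ^^ a) x = (f ^^ b) x" for a b
  proof -
    have "(f ^^ (period f x - b + a)) x = (f ^^ (period f x - b + b)) x"
      using that(3) by (simp add: funpow_add)
    also have "\<dots> = x" using that(2) funpow_period[OF assms] by simp
    finally have "period f x dvd period f x - b + a" using funpow_eq_self_iff[OF assms] by simp
    then have "period f x \<le> period f x - b + a" using that(2) by (auto dest: dvd_imp_le)
    then show ?thesis using that by simp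
  qed
  then show ?thesis unfolding inj_on_def by (metis lessThan_iff nle_le)
qed

lemma card_iter_orbit: "x \<in> S \<Longrightarrow> card (iter_orbit f x) = period f x"
  by (simp add: iter_orbit_eq_image card_image inj_on_funpow_period)

lemma iter_orbit_eq:
  assumes "x \<in> S" "y \<in> iter_orbit f x" shows "iter_orbit f y = iter_orbit f x"
proof -
  obtain j where y: "y = (f ^^ j) x" using assms(2) unfolding iter_orbit_def by auto
  have "(f ^^ ((N - 1) * j)) y = (f ^^ (N * j)) x"
    using N_pos by (simp add: y funpow_add[symmetric, THEN fun_cong, simplified] algebra_simps)
  also have "\<dots> = x" using funpow_mult_fixed funpow_N[OF assms(1)] by metis
  finally have "x \<in> iter_orbit f y" unfolding iter_orbit_def by (metis rangeI)
  moreover have "iter_orbit f z \<subseteq> iter_orbit f w" if "z \<in> iter_orbit f w" for z w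
    using that unfolding iter_orbit_def by (auto simp: funpow_add[symmetric, THEN fun_cong, simplified])
  ultimately show ?thesis using assms(2) by blast
qed

lemma ncycles_eq_sum_inverse_period: "real (ncycles S f) = (\<Sum>x\<in>S. 1 / real (period f x))"
proof -
  have orbit_sum: "(\<Sum>x\<in>{x\<in>S. iter_orbit f x = B}. 1 / real (period f x)) = 1"
    if B: "B \<in> iter_orbit f ` S" for B
  proof -
    obtain y where y: "y \<in> S" "B = iter_orbit f y" using B by auto
    have B_eq: "{x\<in>S. iter_orbit f x = B} = B"
    proof (intro equalityI subsetI)
      show "x \<in> B" if "x \<in> {x\<in>S. iter_orbit f x = B}" for x
        using that self_in_iter_orbit by auto
      show "x \<in> {x\<in>S. iter_orbit f x = B}" if "x \<in> B" for x
        using that y iter_orbit_subset[OF y(1)] iter_orbit_eq[OF y(1)] by blast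
    qed
    have "period f x = card B" if "x \<in> B" for x
    proof -
      have "x \<in> S" "iter_orbit f x = B" using that B_eq by auto
      then show ?thesis using card_iter_orbit by metis
    qed
    then have "(\<Sum>x\<in>{x\<in>S. iter_orbit f x = B}. 1 / real (period f x)) = (\<Sum>x\<in>B. 1 / real (card B))"
      unfolding B_eq by simp
    also have "\<dots> = 1" using card_iter_orbit[OF y(1)] period_pos[OF y(1)] y(2) by simp
    finally show ?thesis .
  qed
  have "(\<Sum>x\<in>S. 1 / real (period f x))
      = (\<Sum>B\<in>iter_orbit f ` S. \<Sum>x\<in>{x\<in>S. iter_orbit f x = B}. 1 / real (period f x))"
    by (rule sum.image_gen[OF finite_S])
  also have "\<dots> = real (ncycles S f)" by (simp add: orbit_sum ncycles_iter_orbit)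
  finally show ?thesis by simp
qed

lemma ncycles_burnside:
  "real N * real (ncycles S f) = (\<Sum>k<N. real (card {x\<in>S. (f ^^ k) x = x}))"
proof -
  have times_fixed: "(\<Sum>k<N. if (f ^^ k) x = x then 1 else 0) = real N * (1 / real (period f x))"
    if x: "x \<in> S" for x
  proof -
    have "(\<Sum>k<N. if (f ^^ k) x = x then 1 else 0) = real (card {k\<in>{..<N}. period f x dvd k})"
      using funpow_eq_self_iff[OF x] by (simp add: sum.If_cases Int_def)
    also have "\<dots> = real N / real (period f x)"
      unfolding card_multiples_lessThan[OF period_pos[OF x] period_dvd_N[OF x]]
      by (simp add: period_dvd_N[OF x] real_of_nat_div)
    finally show ?thesis by simp
  qed
  have "(\<Sum>k<N. real (card {x\<in>S. (f ^^ k) x = x})) = (\<Sum>k<N. \<Sum>x\<in>S. if (f ^^ k) x = x then 1 else 0)"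
    using finite_S by (simp add: sum.If_cases Int_def)
  also have "\<dots> = (\<Sum>x\<in>S. \<Sum>k<N. if (f ^^ k) x = x then 1 else 0)" by (rule sum.swap)
  also have "\<dots> = (\<Sum>x\<in>S. real N * (1 / real (period f x)))"
    using times_fixed by simp
  also have "\<dots> = real N * real (ncycles S f)"
    by (simp add: ncycles_eq_sum_inverse_period sum_distrib_left)
  finally show ?thesis by simp
qed

end


section \<open>Multiplicative orders and the period of an affine map\<close>

lemma
  assumes "0 < m" "coprime r (int m)"
  shows mord_dvd_iff: "int m dvd r ^ k - 1 \<longleftrightarrow> mord m r dvd k"
    and mord_pos: "0 < mord m r"
proof -
  define a where "a = nat (r mod int m)"
  have "[r ^ k = 1] (mod int m) \<longleftrightarrow> [int a ^ k = 1] (mod int m)" for k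
    using assms(1) by (simp add: a_def cong_def power_mod)
  also have "\<dots> k \<longleftrightarrow> ord m a dvd k" for k
    using cong_int_iff[of "a ^ k" 1 m] by (simp add: ord_divides')
  finally have pow_iff: "[r ^ k = 1] (mod int m) \<longleftrightarrow> ord m a dvd k" for k .
  have "coprime (int a) (int m)" using assms by (simp add: a_def)
  then have ord_pos: "0 < ord m a" using ord_eq_0[of m a] by (simp add: coprime_commute)
  then have mord_ord: "mord m r = ord m a"
    unfolding mord_def pow_iff by (intro Least_equality) (auto dest: dvd_imp_le)
  show "0 < mord m r" using mord_ord ord_pos by simp
  show "int m dvd r ^ k - 1 \<longleftrightarrow> mord m r dvd k"
    using pow_iff mord_ord by (simp add: cong_iff_dvd_diff cong_sym_eq)
qed

lemma divisor_pos_coprime: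
  assumes "0 < n" "coprime r (int n)" "d dvd n"
  shows "0 < d" and "coprime r (int d)"
  using assms by (auto intro: coprime_divisors[of "int d" "int n" r r, simplified])

lemma mord_dvd_mord:
  assumes "0 < n" "coprime r (int n)" "d dvd n"
  shows "mord d r dvd mord n r"
proof -
  have "0 < d" "coprime r (int d)" using divisor_pos_coprime[OF assms] by simp_all
  moreover have "int d dvd r ^ mord n r - 1"
    using assms mord_dvd_iff[OF assms(1,2)] by (meson dvd_refl dvd_trans int_dvd_int_iff)
  ultimately show ?thesis by (simp add: mord_dvd_iff)
qed

lemma Ssum_Suc: "Ssum (Suc k) x = 1 + x * Ssum k x"
  unfolding Ssum_def sum.lessThan_Suc_shift by (simp add: sum_distrib_left)

lemma Ssum_add: "Ssum (a + b) x = Ssum a x + x ^ a * Ssum b x"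
  by (induction b) (simp_all add: Ssum_def power_add algebra_simps)

lemma Ssum_geometric: "(x - 1) * Ssum k x = x ^ k - 1"
  by (induction k) (simp_all add: Ssum_Suc algebra_simps Ssum_def)

lemma Ssum_mult_cong:
  assumes "[r ^ p = 1] (mod M)"
  shows "[Ssum (p * q) r = int q * Ssum p r] (mod M)"
proof (induction q)
  case (Suc q)
  have "[r ^ (p * q) = 1] (mod M)"
    using cong_pow[OF assms, of q] by (simp add: power_mult)
  then have "[Ssum (p * q) r + r ^ (p * q) * Ssum p r = int q * Ssum p r + 1 * Ssum p r] (mod M)"
    using Suc.IH by (intro cong_add cong_mult cong_refl)
  moreover have "Ssum (p * Suc q) r = Ssum (p * q) r + r ^ (p * q) * Ssum p r"
    using Ssum_add[of "p * q" p r] by (simp add: add.commute)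
  ultimately show ?case by (simp add: algebra_simps)
qed (simp add: Ssum_def)

lemma dvd_mult_iff_div_gcd_dvd:
  fixes m q c :: int
  assumes "m \<noteq> 0"
  shows "m dvd q * c \<longleftrightarrow> m div gcd m c dvd q"
proof -
  define g where "g = gcd m c"
  have g: "g \<noteq> 0" "m = g * (m div g)" "c = g * (c div g)" using assms by (simp_all add: g_def)
  have "coprime (m div g) (c div g)" using assms by (simp add: g_def div_gcd_coprime)
  then have "m div g dvd q * (c div g) \<longleftrightarrow> m div g dvd q"
    by (simp add: coprime_dvd_mult_left_iff)
  moreover have "m dvd q * c \<longleftrightarrow> g * (m div g) dvd g * (q * (c div g))"
    using g(2,3) by (metis mult.left_commute)
  then have "m dvd q * c \<longleftrightarrow> m div g dvd q * (c div g)" using g(1) by simp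
  ultimately show ?thesis by (simp add: g_def)
qed

lemma kappa_eq_mord_mult:
  assumes "0 < m"
  shows "kappa m r t = mord m r * nat (int m div gcd (int m) (t * Ssum (mord m r) r))"
proof -
  define G where "G = gcd (int m) (t * Ssum (mord m r) r)"
  have "0 < G" "G dvd int m" using assms by (simp_all add: G_def)
  then have "int m * int (mord m r) div G = int (mord m r) * (int m div G)"
    by (metis dvd_div_mult mult.commute)
  moreover have "0 \<le> int m div G" using \<open>0 < G\<close> by (simp add: pos_imp_zdiv_nonneg_iff)
  ultimately show ?thesis by (simp add: kappa_def G_def[symmetric] nat_mult_distrib)
qed

text \<open>\<open>kappa m r t\<close> is the period of the affine map \<open>x \<mapsto> r x + t\<close> on \<open>\<int>/m\<close>,
  whose \<open>k\<close>-th iterate is \<open>x \<mapsto> r\<^sup>k x + t Ssum k r\<close>.\<close>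

lemma
  assumes "0 < m" "coprime r (int m)"
  shows kappa_dvd_iff: "int m dvd r ^ k - 1 \<and> int m dvd t * Ssum k r \<longleftrightarrow> kappa m r t dvd k"
    and kappa_pos: "0 < kappa m r t"
proof -
  define p where "p = mord m r"
  define m' where "m' = int m div gcd (int m) (t * Ssum p r)"
  have p_pos: "0 < p" using mord_pos[OF assms] by (simp add: p_def)
  have m'_pos: "0 < m'" using assms(1) by (simp add: m'_def pos_imp_zdiv_pos_iff zdvd_imp_le)
  have kappa: "kappa m r t = p * nat m'"
    using kappa_eq_mord_mult[OF assms(1)] by (simp add: p_def m'_def)
  then show "0 < kappa m r t" using p_pos m'_pos by simp
  have Ssum_iff: "int m dvd t * Ssum (p * q) r \<longleftrightarrow> nat m' dvd q" for q
  proof -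
    have "[r ^ p = 1] (mod int m)"
      using mord_dvd_iff[OF assms] by (simp add: p_def cong_iff_dvd_diff cong_sym_eq)
    then have "[t * Ssum (p * q) r = int q * (t * Ssum p r)] (mod int m)"
      using Ssum_mult_cong cong_scalar_left by (metis mult.left_commute)
    then have "int m dvd t * Ssum (p * q) r \<longleftrightarrow> int m dvd int q * (t * Ssum p r)"
      using cong_dvd_iff by blast
    also have "\<dots> \<longleftrightarrow> m' dvd int q"
      using assms(1) by (simp add: m'_def dvd_mult_iff_div_gcd_dvd)
    finally show ?thesis using m'_pos by (metis int_dvd_int_iff int_nat_eq order_less_imp_le)
  qed
  show "int m dvd r ^ k - 1 \<and> int m dvd t * Ssum k r \<longleftrightarrow> kappa m r t dvd k"
  proof (cases "p dvd k")
    case True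
    then obtain q where "k = p * q" by blast
    then show ?thesis using Ssum_iff p_pos kappa mord_dvd_iff[OF assms] by (simp add: p_def)
  next
    case False
    then show ?thesis using kappa mord_dvd_iff[OF assms] by (auto simp: p_def dest: dvd_mult_left)
  qed
qed

lemma gcd_mult_absorb_gcd: "gcd a (b * c) = gcd a (gcd a b * c)" for a b c :: int
  by (metis (no_types, opaque_lifting) gcd.commute gcd.left_commute gcd_add1
    gcd_add_mult gcd_mult_distrib_int gcd_right_idem mult.commute)

lemma kappa_gcd_right:
  assumes "d dvd n"
  shows "kappa d r (gcd t (int n)) = kappa d r t"
proof -
  have "gcd (int d) (gcd t (int n)) = gcd (int d) t"
    using assms by (metis gcd.assoc gcd.commute gcd_nat.absorb1 gcd_int_int_eq)
  then have "gcd (int d) (gcd t (int n) * S) = gcd (int d) (t * S)" for S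
    by (metis gcd_mult_absorb_gcd)
  then show ?thesis unfolding kappa_def by simp
qed

lemma squarefree_coprime_div:
  fixes n d :: nat
  assumes "squarefree n" "d dvd n"
  shows "coprime d (n div d)"
proof -
  have "gcd d (n div d) ^ 2 dvd d * (n div d)"
    by (simp add: power2_eq_square mult_dvd_mono)
  then have "gcd d (n div d) ^ 2 dvd n" using assms(2) by simp
  then have "is_unit (gcd d (n div d))" by (rule squarefreeD[OF assms(1)])
  then show ?thesis by (simp only: is_unit_gcd)
qed

lemma card_residue_class:
  fixes q D z :: int
  assumes "0 < q" "0 \<le> D"
  shows "card {j\<in>{0..<D * q}. [j = z] (mod q)} = nat D"
proof -
  have "{j\<in>{0..<D * q}. [j = z] (mod q)} = (\<lambda>i. z mod q + q * i) ` {0..<D}"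
  proof (intro equalityI subsetI)
    fix j assume "j \<in> {j\<in>{0..<D * q}. [j = z] (mod q)}"
    then have j: "0 \<le> j" "j < D * q" "j mod q = z mod q" by (auto simp: cong_def)
    have "j div q * q \<le> j" using pos_mod_sign[of q j] div_mult_mod_eq[of j q] assms(1) by linarith
    then have "j div q < D" using j(2) assms(1) by (meson linorder_not_less mult_right_mono order.strict_trans1 less_le_not_le)
    moreover have "0 \<le> j div q" using j(1) assms(1) by (simp add: pos_imp_zdiv_nonneg_iff)
    ultimately show "j \<in> (\<lambda>i. z mod q + q * i) ` {0..<D}"
      using j(3) by (metis atLeastLessThan_iff image_eqI mod_mult_div_eq)
  next
    fix j assume "j \<in> (\<lambda>i. z mod q + q * i) ` {0..<D}"
    then obtain i where i: "0 \<le> i" "i < D" "j = z mod q + q * i" by auto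
    have "q * (i + 1) \<le> q * D" using i assms by (intro mult_left_mono) auto
    moreover have "0 \<le> q * i" using i assms by simp
    moreover have "0 \<le> z mod q" "z mod q < q" using assms by simp_all
    ultimately have "0 \<le> j" "j < D * q" using i(3) by (simp_all add: algebra_simps)
    then show "j \<in> {j\<in>{0..<D * q}. [j = z] (mod q)}" using i(3) by (simp add: cong_def)
  qed
  moreover have "inj_on (\<lambda>i. z mod q + q * i) {0..<D}" using assms by (auto simp: inj_on_def)
  ultimately show ?thesis by (simp add: card_image)
qed

lemma card_linear_congruence_solutions:
  fixes a c :: int and n :: nat
  assumes "0 < n"
  shows "card {j\<in>{0..<int n}. int n dvd a * j + c}
           = (if gcd a (int n) dvd c then nat (gcd a (int n)) else 0)"
proof (cases "gcd a (int n) dvd c")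
  case False
  then have "\<not> int n dvd a * j + c" for j
    by (meson dvd_add_right_iff dvd_mult2 dvd_trans gcd_dvd1 gcd_dvd2)
  then show ?thesis using False by simp
next
  case True
  define D where "D = gcd a (int n)"
  define q where "q = int n div D"
  obtain a' where a': "a = D * a'" by (metis D_def dvdE gcd_dvd1)
  obtain c' where c': "c = D * c'" using True by (auto simp: D_def)
  have D_pos: "0 < D" using assms by (simp add: D_def)
  have n_eq: "int n = D * q" by (simp add: D_def q_def)
  then have q_pos: "0 < q" using assms D_pos by (metis of_nat_0_less_iff zero_less_mult_pos)
  have "a div D = a'" using a' D_pos by simp
  then have "coprime a' q"
    using assms div_gcd_coprime[of a "int n"] by (simp add: D_def[symmetric] q_def[symmetric])
  then obtain u where "[a' * u = 1] (mod q)" using cong_solve_coprime_int by blast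
  then have u: "q dvd u * a' - 1" by (simp add: cong_iff_dvd_diff mult.commute)
  have "int n dvd a * j + c \<longleftrightarrow> q dvd a' * j + c'" for j
  proof -
    have "a * j + c = D * (a' * j + c')" by (simp add: a' c' algebra_simps)
    then show ?thesis using D_pos n_eq by simp
  qed
  also have "q dvd a' * j + c' \<longleftrightarrow> [j = - u * c'] (mod q)" for j
  proof -
    have "j + u * c' = u * (a' * j + c') - (u * a' - 1) * j"
      and "a' * j + c' = a' * (j + u * c') - (u * a' - 1) * c'"
      by (simp_all add: algebra_simps)
    then have "q dvd a' * j + c' \<longleftrightarrow> q dvd j + u * c'"
      using u by (metis dvd_diff dvd_mult dvd_mult2)
    then show ?thesis by (simp add: cong_iff_dvd_diff)
  qed
  finally have "{j\<in>{0..<int n}. int n dvd a * j + c} = {j\<in>{0..<D * q}. [j = - u * c'] (mod q)}"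
    using n_eq by auto
  then show ?thesis using True card_residue_class q_pos D_pos by (simp add: D_def)
qed

lemma card_gcd_eq_totient_lessThan:
  assumes "0 < e" "l dvd e"
  shows "card {m\<in>{..<e}. gcd m e = l} = totient (e div l)"
proof (cases "l = e")
  case True
  then have "{m\<in>{..<e}. gcd m e = l} = {0}"
    using assms by (auto simp: gcd_nat.absorb_iff2[symmetric] dest: dvd_imp_le)
  then show ?thesis using True assms by simp
next
  case False
  then have "{m\<in>{..<e}. gcd m e = l} = {k\<in>{0<..e}. gcd k e = l}"
    using assms by (auto simp: order.order_iff_strict intro!: Nat.gr0I)
  then show ?thesis using card_gcd_eq_totient assms by simp
qed

lemma gcd_eq_if_same_divisors:
  fixes X Y :: int
  assumes "0 < n" "\<And>D. D dvd n \<Longrightarrow> int D dvd X \<longleftrightarrow> int D dvd Y"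
  shows "gcd X (int n) = gcd Y (int n)"
proof -
  have "gcd A (int n) dvd gcd B (int n)"
    if "\<And>D. D dvd n \<Longrightarrow> int D dvd A \<Longrightarrow> int D dvd B" for A B
  proof -
    define G where "G = nat (gcd A (int n))"
    then have G: "int G = gcd A (int n)" by simp
    have "G dvd n" using G by (metis gcd_dvd2 int_dvd_int_iff)
    moreover have "int G dvd A" using G by simp
    ultimately have "int G dvd B" by (rule that)
    then show ?thesis using G \<open>G dvd n\<close> by (metis gcd_greatest int_dvd_int_iff)
  qed
  then show ?thesis using assms(2) by (meson zdvd_antisym_nonneg gcd_ge_0_int)
qed

lemma gcd_pow_minus_one_mult_eq:
  assumes "0 < n" "coprime r (int n)"
  shows "gcd (r ^ (c * m) - 1) (int n)
           = gcd (r ^ (c * gcd m (mord n r div gcd c (mord n r))) - 1) (int n)"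
proof (rule gcd_eq_if_same_divisors[OF assms(1)])
  fix D assume D: "D dvd n"
  define e where "e = mord n r div gcd c (mord n r)"
  have "0 < D" "coprime r (int D)" using divisor_pos_coprime[OF assms D] by simp_all
  then have iff: "int D dvd r ^ x - 1 \<longleftrightarrow> mord D r dvd x" for x by (rule mord_dvd_iff)
  have "lcm c (mord n r) = c * e" by (simp add: e_def lcm_nat_def div_mult_swap)
  then have "mord D r dvd c * e" using mord_dvd_mord[OF assms D] by (metis dvd_lcm2 dvd_trans)
  then have "mord D r dvd c * m \<longleftrightarrow> mord D r dvd gcd (c * m) (c * e)" by simp
  also have "gcd (c * m) (c * e) = c * gcd m e" by (simp add: gcd_mult_distrib_nat)
  finally show "int D dvd r ^ (c * m) - 1 \<longleftrightarrow> int D dvd r ^ (c * gcd m e) - 1" by (simp add: iff)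
qed

lemma coprime_cofactor_base_minus_one:
  assumes "gcd (r ^ k - 1) (int n) = int d" "d dvd n" "coprime d (n div d)"
  shows "coprime (int (n div d)) (r - 1)"
proof -
  define g where "g = gcd (int (n div d)) (r - 1)"
  have "g dvd r ^ k - 1" using Ssum_geometric[of r k] by (metis g_def dvd_trans dvd_triv_left gcd_dvd2)
  moreover have "g dvd int n"
    using assms(2) by (metis g_def dvd_div_mult_self dvd_trans dvd_triv_left gcd_dvd1 of_nat_dvd_iff)
  ultimately have "g dvd int d" using assms(1) by (metis gcd_greatest)
  moreover have "g dvd int (n div d)" by (simp add: g_def)
  ultimately have "is_unit g" using assms(3) by (meson coprime_common_divisor coprime_int_iff)
  then show ?thesis unfolding g_def using is_unit_gcd by blast
qed

lemma kappa_eq_lcm: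
  assumes "0 < n" "coprime r (int n)" "d dvd n"
    and "coprime d (n div d)" "coprime (int (n div d)) (r - 1)"
  shows "kappa n r t = lcm (kappa d r t) (mord n r)"
proof -
  define L where "L = lcm (kappa d r t) (mord n r)"
  have "0 < d" "coprime r (int d)" using divisor_pos_coprime[OF assms(1-3)] by simp_all
  note kappa_d = kappa_dvd_iff[OF this]
  note kappa_n = kappa_dvd_iff[OF assms(1,2)]
  have d_dvd_n: "int d dvd int n" using assms(3) by simp
  have "kappa d r t dvd kappa n r t"
    using kappa_n[of "kappa n r t" t] kappa_d d_dvd_n by (meson dvd_refl dvd_trans)
  moreover have "mord n r dvd kappa n r t"
    using kappa_n[of "kappa n r t" t] mord_dvd_iff[OF assms(1,2)] by simp
  ultimately have "L dvd kappa n r t" by (simp add: L_def)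
  moreover have "kappa n r t dvd L"
  proof -
    have n_L: "int n dvd r ^ L - 1" using mord_dvd_iff[OF assms(1,2)] by (simp add: L_def)
    have "int d dvd t * Ssum L r" using kappa_d[of L t] by (simp add: L_def)
    moreover have "int (n div d) dvd t * Ssum L r"
    proof -
      have "int (n div d) dvd (r - 1) * Ssum L r"
        using n_L assms(3) by (metis Ssum_geometric dvd_trans dvd_div_mult_self dvd_triv_left of_nat_dvd_iff)
      then show ?thesis using assms(5) by (simp add: coprime_dvd_mult_right_iff coprime_commute)
    qed
    ultimately have "int d * int (n div d) dvd t * Ssum L r"
      using assms(4) by (simp add: divides_mult)
    then have "int n dvd t * Ssum L r" using assms(3) by (simp flip: of_nat_mult)
    then show ?thesis using n_L kappa_n[of L t] by blast
  qed
  ultimately show ?thesis by (simp add: L_def dvd_antisym)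
qed

lemma card_div_gcd_eq_totient:
  assumes "0 < n" "1 < d" "d dvd n"
  shows "card {i\<in>{1..<n}. n div gcd i n = d} = totient d"
proof -
  have n_eq: "n = (n div d) * d" using assms(3) by simp
  then have "0 < n div d" using assms(1) by (metis gr0I mult_is_0)
  then have cofactor: "n div (n div d) = d" using n_eq by (metis nonzero_mult_div_cancel_left less_not_refl2)
  have "{i\<in>{1..<n}. n div gcd i n = d} = {k\<in>{0<..n}. gcd k n = n div d}"
  proof (intro equalityI subsetI)
    fix i assume "i \<in> {i\<in>{1..<n}. n div gcd i n = d}"
    then have i: "1 \<le> i" "i < n" "n div gcd i n = d" by auto
    have "n = gcd i n * (n div gcd i n)" by simp
    then have "n div d = gcd i n * d div d" using i(3) by simp
    then have "gcd i n = n div d" using assms(2) by simp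
    then show "i \<in> {k\<in>{0<..n}. gcd k n = n div d}" using i by auto
  next
    fix i assume "i \<in> {k\<in>{0<..n}. gcd k n = n div d}"
    then have i: "0 < i" "i \<le> n" "gcd i n = n div d" by auto
    have "n div d < n" using assms by simp
    then have "i \<noteq> n" using i by auto
    moreover have "n div gcd i n = d" using i(3) cofactor by simp
    ultimately show "i \<in> {i\<in>{1..<n}. n div gcd i n = d}" using i by auto
  qed
  moreover have "n div d dvd n" using n_eq by (metis dvd_triv_left)
  ultimately show ?thesis using card_gcd_eq_totient[of n "n div d"] assms(1) cofactor by simp
qed

lemma card_gcd_pow_minus_one_eq:
  fixes c :: nat
  assumes "0 < n" "coprime r (int n)"
  defines "e \<equiv> mord n r div gcd c (mord n r)"
  shows "card {m\<in>{..<e}. gcd (r ^ (c * m) - 1) (int n) = int d}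
       = (\<Sum>l | 0 < l \<and> l dvd e \<and> gcd (r ^ (l * c) - 1) (int n) = int d. totient (e div l))"
proof -
  define Ld where "Ld = {l. 0 < l \<and> l dvd e \<and> gcd (r ^ (l * c) - 1) (int n) = int d}"
  have "0 < e"
    using mord_pos[OF assms(1,2)] by (simp add: e_def div_greater_zero_iff)
  have reduce: "gcd (r ^ (c * m) - 1) (int n) = gcd (r ^ (gcd m e * c) - 1) (int n)" for m
    using gcd_pow_minus_one_mult_eq[OF assms(1,2), of c m] by (simp add: e_def mult.commute)
  have partition:
    "{m\<in>{..<e}. gcd (r ^ (c * m) - 1) (int n) = int d} = (\<Union>l\<in>Ld. {m\<in>{..<e}. gcd m e = l})"
  proof (intro equalityI subsetI)
    fix m assume "m \<in> {m\<in>{..<e}. gcd (r ^ (c * m) - 1) (int n) = int d}"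
    then have "m < e" "gcd m e \<in> Ld" using reduce[of m] \<open>0 < e\<close> by (auto simp: Ld_def)
    then show "m \<in> (\<Union>l\<in>Ld. {m\<in>{..<e}. gcd m e = l})" by blast
  next
    fix m assume "m \<in> (\<Union>l\<in>Ld. {m\<in>{..<e}. gcd m e = l})"
    then have "m < e" "gcd m e \<in> Ld" by auto
    then show "m \<in> {m\<in>{..<e}. gcd (r ^ (c * m) - 1) (int n) = int d}"
      using reduce[of m] by (simp add: Ld_def)
  qed
  have "finite Ld" using \<open>0 < e\<close> by (auto simp: Ld_def intro: finite_subset[of _ "{l. l dvd e}"])
  then have "card {m\<in>{..<e}. gcd (r ^ (c * m) - 1) (int n) = int d}
      = (\<Sum>l\<in>Ld. card {m\<in>{..<e}. gcd m e = l})"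
    unfolding partition by (intro card_UN_disjoint) auto
  also have "\<dots> = (\<Sum>l\<in>Ld. totient (e div l))"
    using card_gcd_eq_totient_lessThan \<open>0 < e\<close> by (intro sum.cong) (auto simp: Ld_def)
  finally show ?thesis by (simp add: Ld_def)
qed

lemma card_kappa_multiples_gcd_eq:
  assumes "0 < n" "squarefree n" "coprime r (int n)" "d dvd n"
  shows "card {k\<in>{..<kappa n r t}. gcd (r ^ k - 1) (int n) = int d \<and> kappa d r t dvd k}
       = card {m\<in>{..<mord n r div gcd (kappa d r t) (mord n r)}.
                 gcd (r ^ (kappa d r t * m) - 1) (int n) = int d}"
    (is "card ?A = card ?B")
proof -
  define c where "c = kappa d r t"
  define e where "e = mord n r div gcd c (mord n r)"
  have coprime_d: "coprime d (n div d)" using assms(2,4) by (rule squarefree_coprime_div)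
  show ?thesis
  proof (cases "coprime (int (n div d)) (r - 1)")
    case True
    have "0 < d" "coprime r (int d)" using divisor_pos_coprime[OF assms(1,3,4)] by simp_all
    then have "0 < c" by (simp add: c_def kappa_pos)
    have "kappa n r t = c * e"
      using kappa_eq_lcm[OF assms(1,3,4) coprime_d True]
      by (simp add: c_def e_def lcm_nat_def div_mult_swap)
    then have "?A = (\<lambda>m. c * m) ` ?B"
      using \<open>0 < c\<close> by (auto simp: c_def e_def)
    moreover have "inj_on (\<lambda>m. c * m) ?B" using \<open>0 < c\<close> by (simp add: inj_on_def)
    ultimately show ?thesis by (simp add: card_image)
  next
    case False
    then have "?A = {}" "?B = {}"
      using coprime_cofactor_base_minus_one[OF _ assms(4) coprime_d] by blast+
    then show ?thesis by (simp only: card.empty)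
  qed
qed


section \<open>The automorphisms of the dihedral group\<close>

lemma V_set_eq_image: "V_set n = (\<lambda>j. (j, True)) ` {0..<int n}"
  unfolding V_set_def by auto

lemma U_set_eq_image: "U_set n = (\<lambda>i. (int i, False)) ` {1..<n}"
proof
  show "U_set n \<subseteq> (\<lambda>i. (int i, False)) ` {1..<n}"
  proof
    fix x assume "x \<in> U_set n"
    then obtain i where i: "x = (i, False)" "1 \<le> i" "i < int n" unfolding U_set_def by auto
    then have "nat i \<in> {1..<n}" "i = int (nat i)" by auto
    then show "x \<in> (\<lambda>i. (int i, False)) ` {1..<n}" using i by (metis image_eqI)
  qed
qed (auto simp: U_set_def)

lemma funpow_aut_U:
  assumes "0 \<le> i" "i < int n"
  shows "(aut n r t ^^ k) (i, False) = ((r ^ k * i) mod int n, False)"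
  by (induction k) (use assms in \<open>simp_all add: aut_def mod_mult_right_eq mult.assoc\<close>)

lemma funpow_aut_V:
  assumes "0 \<le> i" "i < int n"
  shows "(aut n r t ^^ k) (i, True) = ((r ^ k * i + t * Ssum k r) mod int n, True)"
proof (induction k)
  case (Suc k)
  have "(r * ((r ^ k * i + t * Ssum k r) mod int n) + t) mod int n
      = (r * (r ^ k * i + t * Ssum k r) + t) mod int n"
    by (metis mod_add_left_eq mod_mult_right_eq)
  also have "r * (r ^ k * i + t * Ssum k r) + t = r ^ Suc k * i + t * Ssum (Suc k) r"
    by (simp add: Ssum_Suc algebra_simps)
  finally show ?case using Suc.IH by (simp add: aut_def)
qed (use assms in \<open>simp add: Ssum_def\<close>)

lemma funpow_aut_V_eq_self_iff:
  assumes "0 \<le> j" "j < int n"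
  shows "(aut n r t ^^ k) (j, True) = (j, True) \<longleftrightarrow> int n dvd (r ^ k - 1) * j + t * Ssum k r"
proof -
  have "(aut n r t ^^ k) (j, True) = (j, True) \<longleftrightarrow> (r ^ k * j + t * Ssum k r) mod int n = j mod int n"
    using assms by (simp add: funpow_aut_V)
  also have "\<dots> \<longleftrightarrow> int n dvd (r ^ k * j + t * Ssum k r) - j" by (rule mod_eq_dvd_iff)
  finally show ?thesis by (simp add: algebra_simps)
qed

lemma periodic_map_V:
  assumes "0 < n" "coprime r (int n)"
  shows "periodic_map (V_set n) (aut n r t) (kappa n r t)"
proof
  show "finite (V_set n)" by (simp add: V_set_eq_image)
  show "aut n r t x \<in> V_set n" if "x \<in> V_set n" for x
    using that assms(1) by (auto simp: V_set_def aut_def)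
  show "0 < kappa n r t" using kappa_pos[OF assms] .
  show "(aut n r t ^^ kappa n r t) x = x" if "x \<in> V_set n" for x
    using that kappa_dvd_iff[OF assms, of "kappa n r t" t]
    by (auto simp: V_set_def funpow_aut_V_eq_self_iff)
qed

lemma periodic_map_U:
  assumes "0 < n" "coprime r (int n)"
  shows "periodic_map (U_set n) (aut n r 0) (mord n r)"
proof
  show "finite (U_set n)" by (simp add: U_set_eq_image)
  show "aut n r 0 x \<in> U_set n" if x: "x \<in> U_set n" for x
  proof -
    obtain i where i: "x = (i, False)" "1 \<le> i" "i < int n" using x by (auto simp: U_set_def)
    have "\<not> int n dvd r * i"
      using i assms(2) by (metis coprime_commute coprime_dvd_mult_right_iff zdvd_imp_le not_le zero_less_one order.strict_trans2)
    then have "1 \<le> (r * i) mod int n" using assms(1)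
      by (metis dvd_eq_mod_eq_0 int_one_le_iff_zero_less le_less of_nat_0_less_iff pos_mod_sign)
    then show ?thesis using i assms(1) by (simp add: U_set_def aut_def)
  qed
  show "0 < mord n r" using mord_pos[OF assms] .
  show "(aut n r 0 ^^ mord n r) x = x" if x: "x \<in> U_set n" for x
  proof -
    obtain i where i: "x = (i, False)" "1 \<le> i" "i < int n" using x by (auto simp: U_set_def)
    have "int n dvd (r ^ mord n r - 1) * i" using mord_dvd_iff[OF assms] by simp
    then have "(r ^ mord n r * i) mod int n = i mod int n"
      by (simp add: mod_eq_dvd_iff left_diff_distrib)
    then show ?thesis using i by (simp add: funpow_aut_U)
  qed
qed

lemma card_fixed_points_V:
  fixes n k :: nat and r t :: int
  assumes "0 < n" "coprime r (int n)"
  defines "g \<equiv> nat (gcd (r ^ k - 1) (int n))"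
  shows "card {x\<in>V_set n. (aut n r t ^^ k) x = x} = (if kappa g r t dvd k then g else 0)"
proof -
  have g: "int g = gcd (r ^ k - 1) (int n)" by (simp add: g_def)
  then have "g dvd n" by (metis gcd_dvd2 int_dvd_int_iff)
  then have "0 < g" "coprime r (int g)" using divisor_pos_coprime[OF assms(1,2)] by simp_all
  have "{x\<in>V_set n. (aut n r t ^^ k) x = x}
      = (\<lambda>j. (j, True)) ` {j\<in>{0..<int n}. int n dvd (r ^ k - 1) * j + t * Ssum k r}"
    by (auto simp: V_set_eq_image funpow_aut_V_eq_self_iff)
  then have "card {x\<in>V_set n. (aut n r t ^^ k) x = x}
      = card {j\<in>{0..<int n}. int n dvd (r ^ k - 1) * j + t * Ssum k r}"
    by (simp add: card_image inj_on_def)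
  also have "\<dots> = (if int g dvd t * Ssum k r then g else 0)"
    using card_linear_congruence_solutions[OF assms(1)] by (simp add: g_def)
  also have "int g dvd t * Ssum k r \<longleftrightarrow> kappa g r t dvd k"
    using kappa_dvd_iff[OF \<open>0 < g\<close> \<open>coprime r (int g)\<close>, of k t] g by simp
  finally show ?thesis .
qed

lemma period_aut_U:
  assumes "0 < n" "coprime r (int n)" "i \<in> {1..<n}"
  shows "period (aut n r 0) (int i, False) = mord (n div gcd i n) r"
proof -
  interpret periodic_map "U_set n" "aut n r 0" "mord n r" using periodic_map_U[OF assms(1,2)] .
  define q where "q = n div gcd i n"
  have "q dvd n" by (metis q_def dvd_div_mult_self dvd_triv_left gcd_dvd2)
  have "0 < q" "coprime r (int q)" using divisor_pos_coprime[OF assms(1,2) \<open>q dvd n\<close>] by simp_all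
  have i_in_U: "(int i, False) \<in> U_set n" using assms(3) by (auto simp: U_set_eq_image)
  have "(aut n r 0 ^^ k) (int i, False) = (int i, False) \<longleftrightarrow> mord q r dvd k" for k
  proof -
    have "(aut n r 0 ^^ k) (int i, False) = (int i, False)
        \<longleftrightarrow> (r ^ k * int i) mod int n = int i mod int n"
      using assms(3) by (simp add: funpow_aut_U)
    also have "\<dots> \<longleftrightarrow> int n dvd (r ^ k - 1) * int i"
      by (simp add: mod_eq_dvd_iff left_diff_distrib)
    also have "\<dots> \<longleftrightarrow> int n div gcd (int n) (int i) dvd r ^ k - 1"
      using assms(1) by (simp add: dvd_mult_iff_div_gcd_dvd)
    also have "int n div gcd (int n) (int i) = int q"
      by (simp add: q_def gcd.commute zdiv_int flip: gcd_int_int_eq)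
    finally show ?thesis using mord_dvd_iff[OF \<open>0 < q\<close> \<open>coprime r (int q)\<close>] by simp
  qed
  then have "period (aut n r 0) (int i, False) dvd k \<longleftrightarrow> mord q r dvd k" for k
    using funpow_eq_self_iff[OF i_in_U] by simp
  then show ?thesis unfolding q_def by (metis dvd_antisym dvd_refl)
qed

lemma card_fixed_points_V_eq_sum:
  assumes "0 < n" "coprime r (int n)"
  shows "real (card {x\<in>V_set n. (aut n r t ^^ k) x = x})
      = (\<Sum>d | 0 < d \<and> d dvd n. if gcd (r ^ k - 1) (int n) = int d \<and> kappa d r t dvd k then real d else 0)"
proof -
  define g where "g = nat (gcd (r ^ k - 1) (int n))"
  have "finite {d. 0 < d \<and> d dvd n}" using assms(1) by simp
  have "g \<in> {d. 0 < d \<and> d dvd n}"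
    using assms(1) by (auto simp: g_def intro: Nat.gr0I simp flip: int_dvd_int_iff)
  have "gcd (r ^ k - 1) (int n) = int d \<longleftrightarrow> d = g" for d by (auto simp: g_def)
  then have "(\<Sum>d | 0 < d \<and> d dvd n. if gcd (r ^ k - 1) (int n) = int d \<and> kappa d r t dvd k then real d else 0)
      = (\<Sum>d | 0 < d \<and> d dvd n. if d = g then (if kappa d r t dvd k then real d else 0) else 0)"
    by (intro sum.cong) auto
  also have "\<dots> = (if kappa g r t dvd k then real g else 0)"
    using \<open>finite {d. 0 < d \<and> d dvd n}\<close> \<open>g \<in> {d. 0 < d \<and> d dvd n}\<close> by simp
  also have "\<dots> = real (card {x\<in>V_set n. (aut n r t ^^ k) x = x})"
    using card_fixed_points_V[OF assms, of k t] by (simp add: g_def)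
  finally show ?thesis ..
qed

lemma ncycles_V_eq:
  assumes "0 < n" "squarefree n" "coprime r (int n)"
  shows "real (ncycles (V_set n) (aut n r t))
           = (\<Sum>(d, l) \<in> {(d, l). 0 < d \<and> 0 < l \<and> d dvd n
                  \<and> l dvd (mord n r div gcd (kappa d r t) (mord n r))
                  \<and> gcd (r ^ (l * kappa d r t) - 1) (int n) = int d}.
                real d / real (kappa n r t)
                * real (totient (mord n r div (l * gcd (kappa d r t) (mord n r)))))"
proof -
  define K where "K = kappa n r t"
  define e where "e d = mord n r div gcd (kappa d r t) (mord n r)" for d
  define Ld where "Ld d = {l. 0 < l \<and> l dvd e d \<and> gcd (r ^ (l * kappa d r t) - 1) (int n) = int d}" for d
  define Dv where "Dv = {d. 0 < d \<and> d dvd n}"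
  interpret periodic_map "V_set n" "aut n r t" K using periodic_map_V[OF assms(1,3)] by (simp add: K_def)
  have "0 < K" by (simp add: K_def kappa_pos assms)
  have "finite Dv" using assms(1) by (simp add: Dv_def)
  have "0 < e d" for d using mord_pos[OF assms(1,3)] by (simp add: e_def div_greater_zero_iff)
  then have "finite (Ld d)" for d by (auto simp: Ld_def intro: finite_subset[of _ "{l. l dvd e d}"])
  have per_divisor: "(\<Sum>k<K. if gcd (r ^ k - 1) (int n) = int d \<and> kappa d r t dvd k then real d else 0)
      = real d * (\<Sum>l\<in>Ld d. real (totient (e d div l)))" if "d \<in> Dv" for d
  proof -
    have "(\<Sum>k<K. if gcd (r ^ k - 1) (int n) = int d \<and> kappa d r t dvd k then real d else 0)
        = real d * card {k\<in>{..<K}. gcd (r ^ k - 1) (int n) = int d \<and> kappa d r t dvd k}"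
      by (simp add: sum.If_cases Int_def)
    also have "card {k\<in>{..<K}. gcd (r ^ k - 1) (int n) = int d \<and> kappa d r t dvd k}
        = card {m\<in>{..<e d}. gcd (r ^ (kappa d r t * m) - 1) (int n) = int d}"
      using that card_kappa_multiples_gcd_eq[OF assms(1-3), of d t] by (simp add: K_def Dv_def e_def)
    also have "\<dots> = (\<Sum>l\<in>Ld d. totient (e d div l))"
      using card_gcd_pow_minus_one_eq[OF assms(1,3), of "kappa d r t" d] by (simp add: Ld_def e_def)
    finally show ?thesis by simp
  qed
  have "real K * real (ncycles (V_set n) (aut n r t))
      = (\<Sum>k<K. \<Sum>d\<in>Dv. if gcd (r ^ k - 1) (int n) = int d \<and> kappa d r t dvd k then real d else 0)"
    by (simp add: ncycles_burnside card_fixed_points_V_eq_sum[OF assms(1,3)] Dv_def)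
  also have "\<dots> = (\<Sum>d\<in>Dv. real d * (\<Sum>l\<in>Ld d. real (totient (e d div l))))"
    by (simp add: sum.swap[of _ Dv] per_divisor)
  also have "\<dots> = (\<Sum>(d, l)\<in>Sigma Dv Ld. real d * real (totient (e d div l)))"
    using \<open>finite Dv\<close> \<open>\<And>d. finite (Ld d)\<close> by (simp add: sum.Sigma sum_distrib_left)
  finally have "real (ncycles (V_set n) (aut n r t))
      = (\<Sum>(d, l)\<in>Sigma Dv Ld. real d * real (totient (e d div l))) / real K"
    using \<open>0 < K\<close> by (simp add: field_simps)
  also have "\<dots> = (\<Sum>(d, l)\<in>Sigma Dv Ld. real d / real K * real (totient (e d div l)))"
    by (simp add: sum_divide_distrib case_prod_unfold)
  moreover have "e d div l = mord n r div (l * gcd (kappa d r t) (mord n r))" for d l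
    unfolding e_def by (metis div_mult2_eq mult.commute)
  moreover have "Sigma Dv Ld = {(d, l). 0 < d \<and> 0 < l \<and> d dvd n
                  \<and> l dvd (mord n r div gcd (kappa d r t) (mord n r))
                  \<and> gcd (r ^ (l * kappa d r t) - 1) (int n) = int d}"
    by (auto simp: Dv_def Ld_def e_def)
  ultimately show ?thesis by (simp add: K_def)
qed

lemma ncycles_U_eq:
  assumes "0 < n" "coprime r (int n)"
  shows "real (ncycles (U_set n) (aut n r 0))
           = (\<Sum>d | 1 < d \<and> d dvd n. real (totient d) / real (mord d r))"
proof -
  interpret periodic_map "U_set n" "aut n r 0" "mord n r" using periodic_map_U[OF assms] .
  define T where "T = {d. 1 < d \<and> d dvd n}"
  have "finite T" using assms(1) by (auto simp: T_def intro: finite_subset[of _ "{d. d dvd n}"])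
  have "(\<lambda>i. n div gcd i n) ` {1..<n} \<subseteq> T"
  proof
    fix d assume "d \<in> (\<lambda>i. n div gcd i n) ` {1..<n}"
    then obtain i where i: "1 \<le> i" "i < n" "d = n div gcd i n" by auto
    have "gcd i n < n" using i gcd_le1_nat[of i n] by linarith
    moreover have n_eq: "n = gcd i n * d" using i(3) by simp
    ultimately have "d \<noteq> 1" by auto
    moreover have "d \<noteq> 0" using n_eq i(2) by (metis less_nat_zero_code mult_0_right)
    moreover have "d dvd n" using n_eq by (metis dvd_triv_right)
    ultimately show "d \<in> T" by (simp add: T_def)
  qed
  have "real (ncycles (U_set n) (aut n r 0)) = (\<Sum>x\<in>U_set n. 1 / real (period (aut n r 0) x))"
    by (rule ncycles_eq_sum_inverse_period)
  also have "\<dots> = (\<Sum>i\<in>{1..<n}. 1 / real (period (aut n r 0) (int i, False)))"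
    unfolding U_set_eq_image by (subst sum.reindex) (auto simp: inj_on_def)
  also have "\<dots> = (\<Sum>i\<in>{1..<n}. 1 / real (mord (n div gcd i n) r))"
    using period_aut_U[OF assms] by simp
  also have "\<dots> = (\<Sum>d\<in>T. \<Sum>i | i \<in> {1..<n} \<and> n div gcd i n = d. 1 / real (mord (n div gcd i n) r))"
    using \<open>finite T\<close> \<open>(\<lambda>i. n div gcd i n) ` {1..<n} \<subseteq> T\<close> by (intro sum.group[symmetric]) auto
  also have "\<dots> = (\<Sum>d\<in>T. real (totient d) / real (mord d r))"
    using card_div_gcd_eq_totient[OF assms(1)] by (intro sum.cong) (auto simp: T_def)
  finally show ?thesis by (simp add: T_def)
qed

lemma ncycles_V_gcd_right:
  assumes "0 < n" "squarefree n" "coprime r (int n)"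
  shows "ncycles (V_set n) (aut n r (gcd t (int n))) = ncycles (V_set n) (aut n r t)"
proof -
  have "kappa d r (gcd t (int n)) = kappa d r t" if "d dvd n" for d
    using kappa_gcd_right[OF that] .
  then have "real (ncycles (V_set n) (aut n r (gcd t (int n)))) = real (ncycles (V_set n) (aut n r t))"
    unfolding ncycles_V_eq[OF assms] by (intro sum.cong) auto
  then show ?thesis by simp
qed

lemma ncycles_dihedral_split:
  assumes "0 < n" "coprime r (int n)"
  shows "ncycles (dihedral n - {dih_one}) (aut n r t)
           = ncycles (U_set n) (aut n r 0) + ncycles (V_set n) (aut n r t)"
proof -
  interpret U: periodic_map "U_set n" "aut n r 0" "mord n r" using periodic_map_U[OF assms] .
  interpret V: periodic_map "V_set n" "aut n r t" "kappa n r t" using periodic_map_V[OF assms] .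
  have U_orbits: "iter_orbit (aut n r t) x = iter_orbit (aut n r 0) x" if "x \<in> U_set n" for x
    using that by (auto simp: U_set_def iter_orbit_def funpow_aut_U)
  have "dihedral n - {dih_one} = U_set n \<union> V_set n"
    by (auto simp: dihedral_def dih_one_def U_set_def V_set_def)
  moreover have "ncycles (U_set n \<union> V_set n) (aut n r t)
      = ncycles (U_set n) (aut n r t) + ncycles (V_set n) (aut n r t)"
  proof (rule ncycles_Un[OF _ U.finite_S V.finite_S])
    show "U_set n \<inter> V_set n = {}" by (auto simp: U_set_def V_set_def)
    show "iter_orbit (aut n r t) x \<subseteq> U_set n" if "x \<in> U_set n" for x
      using U_orbits[OF that] U.iter_orbit_subset[OF that] by simp
  qed (rule V.iter_orbit_subset)
  moreover have "ncycles (U_set n) (aut n r t) = ncycles (U_set n) (aut n r 0)"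
    using U_orbits by (rule ncycles_cong)
  ultimately show ?thesis by simp
qed

theorem theorem4p4:
  fixes n :: nat and r t' t :: int
  assumes "n > 1" and "squarefree n" and "coprime r (int n)"
    and "t = gcd t' (int n)"
  shows "ncycles (dihedral n - {dih_one}) (aut n r t')
           = ncycles (U_set n) (aut n r 0) + ncycles (V_set n) (aut n r t)
       \<and> real (ncycles (U_set n) (aut n r 0))
           = (\<Sum>d | d > 1 \<and> d dvd n. real (totient d) / real (mord d r))
       \<and> real (ncycles (V_set n) (aut n r t))
           = (\<Sum>(d, l) \<in> {(d, l). 0 < d \<and> 0 < l \<and> d dvd n
                  \<and> l dvd (mord n r div gcd (kappa d r t) (mord n r))
                  \<and> gcd (r ^ (l * kappa d r t) - 1) (int n) = int d}.
                real d / real (kappa n r t)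
                * real (totient (mord n r div (l * gcd (kappa d r t) (mord n r)))))"
proof -
  have n: "0 < n" using assms(1) by simp
  have "ncycles (dihedral n - {dih_one}) (aut n r t')
      = ncycles (U_set n) (aut n r 0) + ncycles (V_set n) (aut n r t)"
    using ncycles_dihedral_split[OF n assms(3)] ncycles_V_gcd_right[OF n assms(2,3)] assms(4)
    by simp
  then show ?thesis using ncycles_U_eq[OF n assms(3)] ncycles_V_eq[OF n assms(2,3)] by simp
qed

end
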